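(* Let $\mathcal{G}^{\mathbb{c}}=(\mathbb{C},\mathbb{E}^{\mathbb{c}})$ be a C-DMG and let $\mathbb{C}_\mathbb{X},\mathbb{C}_\mathbb{Y},\mathbb{C}_\mathbb{W}$ be pairwise disjoint subsets of $\mathbb{C}$. If $\mathbb{C}_\mathbb{X}$ and $\mathbb{C}_\mathbb{Y}$ are d-separated by $\mathbb{C}_\mathbb{W}$ in $\mathcal{G}^{\mathbb{c}}$, then in every ADMG $\mathcal{G}=(\mathbb{V},\mathbb{E})$ compatible with $\mathcal{G}^{\mathbb{c}}$, the sets $\mathbb{X}=\bigcup_{C\in\mathbb{C}_\mathbb{X}}C$ and $\mathbb{Y}=\bigcup_{C\in\mathbb{C}_\mathbb{Y}}C$ are d-separated by $\mathbb{W}=\bigcup_{C\in\mathbb{C}_\mathbb{W}}C$ in $\mathcal{G}$.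
   Context: An ADMG $\mathcal{G}=(\mathbb{V},\mathbb{E})$ is a graph on a finite vertex set $\mathbb{V}$ whose edges are directed edges $X\rightarrow Y$ and bidirected edges $X\leftrightarrow Y$, such that the directed edges form no directed cycle. A C-DMG $\mathcal{G}^{\mathbb{c}}=(\mathbb{C},\mathbb{E}^{\mathbb{c}})$ compatible with an ADMG $\mathcal{G}=(\mathbb{V},\mathbb{E})$ is the graph whose vertex set $\mathbb{C}=\{C_1,\dots,C_k\}$ is a partition of $\mathbb{V}$ (each vertex $C_i$ is a cluster of variables) and in which, for all $C_i,C_j\in\mathbb{C}$ (possibly $i=j$), $C_i\rightarrow C_j$ (resp. $C_i\leftrightarrow C_j$) is an edge iff there exist $X\in C_i$, $Y\in C_j$ with $X\rightarrow Y$ (resp. $X\leftrightarrow Y$) in $\mathbb{E}$; an ADMG is compatible with a C-DMG if the C-DMG arises from it in this way. A C-DMG may contain directed cycles and self-loops. In a graph $\mathcal{G}^*$ (ADMG or C-DMG), $\mathrm{De}(V)$ denotes the descendants of $V$ (vertices reachable by a directed path from $V$, including $V$ itself). A walk $\langle V_1,\dots,V_n\rangle$ (consecutive vertices joined by a specified edge) is blocked by a set $\mathbb{W}^*$ if (1) $V_1\in\mathbb{W}^*$ or $V_n\in\mathbb{W}^*$; or (2) for some $1<i<n$, the walk contains $V_{i-1}\,*\!-\!*\,V_i\rightarrow V_{i+1}$ or $V_{i-1}\leftarrow V_i\,*\!-\!*\,V_{i+1}$ (where $*\!-\!*$ is any edge type) and $V_i\in\mathbb{W}^*$; or (3) for some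 $1<i<n$, the walk contains $V_{i-1}\,*\!\!\rightarrow V_i\leftarrow\!\!*\,V_{i+1}$ (each of these two edges being either directed into $V_i$ or bidirected) and $\mathrm{De}(V_i)\cap\mathbb{W}^*=\emptyset$. A walk that is not blocked is active. A path is a walk with no repeated vertex. For disjoint vertex sets, $\mathbb{W}^*$ d-separates $\mathbb{X}^*$ and $\mathbb{Y}^*$ if it blocks every path from a vertex of $\mathbb{X}^*$ to a vertex of $\mathbb{Y}^*$. *)

theory Defs
  imports Main
begin

text \<open>Mixed graphs: a vertex set, directed edges (a,b) meaning a \<rightarrow> b, and
bidirected edges; a pair (a,b) in bid represents a \<leftrightarrow> b (orientation irrelevant).\<close>
record 'v mgraph =
  verts :: "'v set"
  dir :: "'v rel"
  bid :: "'v rel"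

text \<open>Edge label between consecutive walk vertices v_i and v_(i+1):
Fwd: v_i \<rightarrow> v_(i+1);  Bwd: v_i \<leftarrow> v_(i+1);  Bi: v_i \<leftrightarrow> v_(i+1).\<close>
datatype ekind = Fwd | Bwd | Bi

definition has_edge :: "'v mgraph \<Rightarrow> 'v \<Rightarrow> ekind \<Rightarrow> 'v \<Rightarrow> bool" where
  "has_edge G a k b = (case k of
      Fwd \<Rightarrow> (a, b) \<in> dir G
    | Bwd \<Rightarrow> (b, a) \<in> dir G
    | Bi \<Rightarrow> (a, b) \<in> bid G \<or> (b, a) \<in> bid G)"

definition is_ADMG :: "'v mgraph \<Rightarrow> bool" where
  "is_ADMG G = (finite (verts G) \<and> dir G \<subseteq> verts G \<times> verts G
     \<and> bid G \<subseteq> verts G \<times> verts G \<and> (\<forall>x. (x, x) \<notin> (dir G)\<^sup>+))"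

definition is_partition :: "'v set set \<Rightarrow> 'v set \<Rightarrow> bool" where
  "is_partition P V = ((\<forall>C\<in>P. C \<noteq> {}) \<and> \<Union>P = V
     \<and> (\<forall>C\<in>P. \<forall>C'\<in>P. C \<noteq> C' \<longrightarrow> C \<inter> C' = {}))"

definition compatible :: "'v mgraph \<Rightarrow> 'v set mgraph \<Rightarrow> bool" where
  "compatible G Gc = (is_partition (verts Gc) (verts G)
     \<and> dir Gc = {(Ci, Cj). Ci \<in> verts Gc \<and> Cj \<in> verts Gc \<and> (\<exists>x\<in>Ci. \<exists>y\<in>Cj. (x, y) \<in> dir G)}
     \<and> bid Gc = {(Ci, Cj). Ci \<in> verts Gc \<and> Cj \<in> verts Gc \<and> (\<exists>x\<in>Ci. \<exists>y\<in>Cj. (x, y) \<in> bid G)})"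

definition De :: "'v mgraph \<Rightarrow> 'v \<Rightarrow> 'v set" where
  "De G v = {w. (v, w) \<in> (dir G)\<^sup>*}"

definition is_walk :: "'v mgraph \<Rightarrow> 'v list \<Rightarrow> ekind list \<Rightarrow> bool" where
  "is_walk G vs es = (vs \<noteq> [] \<and> set vs \<subseteq> verts G \<and> length es = length vs - 1
     \<and> (\<forall>i < length es. has_edge G (vs ! i) (es ! i) (vs ! Suc i)))"

definition is_path :: "'v mgraph \<Rightarrow> 'v list \<Rightarrow> ekind list \<Rightarrow> bool" where
  "is_path G vs es = (is_walk G vs es \<and> distinct vs)"

definition blocked :: "'v mgraph \<Rightarrow> 'v list \<Rightarrow> ekind list \<Rightarrow> 'v set \<Rightarrow> bool" where
  "blocked G vs es W =
     (hd vs \<in> W \<or> last vs \<in> W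
      \<or> (\<exists>i. 0 < i \<and> i < length vs - 1 \<and> vs ! i \<in> W
              \<and> (es ! i = Fwd \<or> es ! (i - 1) = Bwd))
      \<or> (\<exists>i. 0 < i \<and> i < length vs - 1
              \<and> (es ! (i - 1) = Fwd \<or> es ! (i - 1) = Bi)
              \<and> (es ! i = Bwd \<or> es ! i = Bi)
              \<and> De G (vs ! i) \<inter> W = {}))"

definition d_separated :: "'v mgraph \<Rightarrow> 'v set \<Rightarrow> 'v set \<Rightarrow> 'v set \<Rightarrow> bool" where
  "d_separated G X Y W = (\<forall>vs es. is_path G vs es \<and> hd vs \<in> X \<and> last vs \<in> Y
     \<longrightarrow> blocked G vs es W)"

end

theory Submission
  imports Defs
begin

(* Map every vertex of G to its cluster. Edges of G become edges of Gc of the same kind and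
   directed paths become directed paths, so a path of G becomes a walk of Gc with the same edge
   kinds, and wherever that walk is blocked by CW the path is blocked by the union of CW.
   It remains to see that d-separation in Gc blocks walks and not only paths: an active walk
   with a repeated vertex shortcuts to a shorter active walk. The only delicate point is a new
   collider at the junction; its descendant in W is found by following the forward edges of the
   original walk up to its next collider. *)

definition collider :: "ekind \<Rightarrow> ekind \<Rightarrow> bool" where
  "collider a b \<longleftrightarrow> (a = Fwd \<or> a = Bi) \<and> (b = Bwd \<or> b = Bi)"

definition active_triple :: "'v mgraph \<Rightarrow> 'v set \<Rightarrow> ekind \<Rightarrow> 'v \<Rightarrow> ekind \<Rightarrow> bool" where
  "active_triple G W a v b =
     (if collider a b then De G v \<inter> W \<noteq> {} else v \<notin> W)"

lemma blocked_iff_inactive_triple: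
  "blocked G vs es W \<longleftrightarrow> hd vs \<in> W \<or> last vs \<in> W \<or>
     (\<exists>k. 0 < k \<and> k < length vs - 1 \<and> \<not> active_triple G W (es ! (k - 1)) (vs ! k) (es ! k))"
proof -
  have "\<not> active_triple G W a v b \<longleftrightarrow>
      v \<in> W \<and> (b = Fwd \<or> a = Bwd) \<or> collider a b \<and> De G v \<inter> W = {}" for a v b
    unfolding active_triple_def collider_def by (cases a; cases b) auto
  then show ?thesis
    unfolding blocked_def collider_def by blast
qed

lemma length_walk: "is_walk G vs es \<Longrightarrow> length vs = Suc (length es)"
  unfolding is_walk_def by auto

lemma walk_has_edge:
  "is_walk G vs es \<Longrightarrow> k < length es \<Longrightarrow> has_edge G (vs ! k) (es ! k) (vs ! Suc k)"
  unfolding is_walk_def by blast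

lemma De_dir_subset: "(a, b) \<in> dir G \<Longrightarrow> De G b \<subseteq> De G a"
  unfolding De_def by (auto intro: converse_rtrancl_into_rtrancl)

lemma active_walk_forward_descendant:
  assumes walk: "is_walk G vs es"
    and active: "\<And>k. 0 < k \<Longrightarrow> k < length es \<Longrightarrow>
                   active_triple G W (es ! (k - 1)) (vs ! k) (es ! k)"
    and "i \<le> j" "j < length es" "es ! j \<noteq> Fwd"
  shows "es ! i = Fwd \<Longrightarrow> De G (vs ! i) \<inter> W \<noteq> {}"
  using \<open>i \<le> j\<close>
proof (induction i rule: inc_induct)
  case base
  then show ?case using \<open>es ! j \<noteq> Fwd\<close> by simp
next
  case (step n)
  have "(vs ! n, vs ! Suc n) \<in> dir G"
    using walk_has_edge[OF walk, of n] step.prems \<open>n < j\<close> \<open>j < length es\<close>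
    unfolding has_edge_def by simp
  then have "De G (vs ! Suc n) \<subseteq> De G (vs ! n)" by (rule De_dir_subset)
  moreover have "De G (vs ! Suc n) \<inter> W \<noteq> {}"
  proof (cases "es ! Suc n = Fwd")
    case True
    then show ?thesis using step.IH by simp
  next
    case False
    then have "collider (es ! n) (es ! Suc n)"
      using step.prems unfolding collider_def by (cases "es ! Suc n") auto
    then show ?thesis
      using active[of "Suc n"] \<open>n < j\<close> \<open>j < length es\<close> unfolding active_triple_def by simp
  qed
  ultimately show ?case by blast
qed

lemma active_triple_at_repetition:
  assumes walk: "is_walk G vs es"
    and active: "\<And>k. 0 < k \<Longrightarrow> k < length es \<Longrightarrow>
                   active_triple G W (es ! (k - 1)) (vs ! k) (es ! k)"
    and "0 < i" "i < j" "j < length es" "vs ! i = vs ! j"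
  shows "active_triple G W (es ! (i - 1)) (vs ! i) (es ! j)"
proof (cases "collider (es ! (i - 1)) (es ! j)")
  case True
  note junction = this
  show ?thesis
  proof (cases "es ! i = Fwd")
    case True
    then have "De G (vs ! i) \<inter> W \<noteq> {}"
      using active_walk_forward_descendant[OF walk active, of i j] assms(4,5) junction
      unfolding collider_def by auto
    then show ?thesis using junction unfolding active_triple_def by simp
  next
    case False
    then have "collider (es ! (i - 1)) (es ! i)"
      using junction unfolding collider_def by (cases "es ! i") auto
    then show ?thesis
      using active[of i] assms(3-5) junction unfolding active_triple_def by simp
  qed
next
  case False
  then have "es ! (i - 1) = Bwd \<or> es ! j = Fwd"
    unfolding collider_def by (cases "es ! (i - 1)"; cases "es ! j") auto
  then have "vs ! i \<notin> W"
    using active[of i] active[of j] assms(3-6) unfolding active_triple_def collider_def by auto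
  then show ?thesis using False unfolding active_triple_def by simp
qed

lemma nth_take_append_drop:
  assumes "i \<le> j" "j \<le> length xs" "k < i + (length xs - j)"
  shows "(take i xs @ drop j xs) ! k = xs ! (if k < i then k else k + (j - i))"
  using assms by (auto simp: nth_append min_def add.commute)

lemma shortcut_walk:
  assumes walk: "is_walk G vs es" and "i < j" "j < length vs" "vs ! i = vs ! j"
  defines "vs' \<equiv> take (Suc i) vs @ drop (Suc j) vs" and "es' \<equiv> take i es @ drop j es"
  shows "is_walk G vs' es'" "hd vs' = hd vs" "last vs' = last vs"
    and "length es' = length es - (j - i)"
    and "k < length vs' \<Longrightarrow> vs' ! k = vs ! (if k < i then k else k + (j - i))"
    and "k < length es' \<Longrightarrow> es' ! k = es ! (if k < i then k else k + (j - i))"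
proof -
  let ?g = "\<lambda>k. if k < i then k else k + (j - i)"
  have len: "length vs = Suc (length es)" by (rule length_walk[OF walk])
  show len': "length es' = length es - (j - i)"
    using assms(2,3) len unfolding es'_def by auto
  have len_vs': "length vs' = Suc (length es')"
    using assms(2,3) len len' unfolding vs'_def by auto
  show es'_nth: "es' ! k = es ! ?g k" if "k < length es'" for k
    using that assms(2,3) len len' unfolding es'_def by (auto simp: nth_take_append_drop)
  show vs'_nth: "vs' ! k = vs ! ?g k" if "k < length vs'" for k
    using that assms(2-4) len len_vs' unfolding vs'_def
    by (cases "k = i") (auto simp: nth_take_append_drop)
  have vs'_nth_Suc: "vs' ! Suc k = vs ! Suc (?g k)" if "k < length es'" for k
    using that assms(2,3) len len_vs' unfolding vs'_def by (auto simp: nth_take_append_drop)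
  show "is_walk G vs' es'"
    unfolding is_walk_def
  proof (intro conjI allI impI)
    show "vs' \<noteq> []" "length es' = length vs' - 1" using len_vs' by auto
    show "set vs' \<subseteq> verts G"
      using walk set_take_subset[of "Suc i" vs] set_drop_subset[of "Suc j" vs]
      unfolding vs'_def is_walk_def by auto
    show "has_edge G (vs' ! k) (es' ! k) (vs' ! Suc k)" if "k < length es'" for k
    proof -
      have "?g k < length es" using that len' by auto
      then show ?thesis
        using walk_has_edge[OF walk] that es'_nth vs'_nth_Suc vs'_nth len_vs' by simp
    qed
  qed
  show "hd vs' = hd vs"
    unfolding vs'_def using len by (cases vs) auto
  show "last vs' = last vs"
  proof -
    have "vs' \<noteq> []" "vs \<noteq> []" "\<not> length es' < i" using assms(2,3) len len' len_vs' by auto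
    then show ?thesis
      using vs'_nth[of "length es'"] assms(2,3) len len' len_vs' by (simp add: last_conv_nth)
  qed
qed

lemma shortcut_not_blocked:
  assumes walk: "is_walk G vs es" and "i < j" "j < length vs" "vs ! i = vs ! j"
    and "\<not> blocked G vs es W"
  shows "\<not> blocked G (take (Suc i) vs @ drop (Suc j) vs) (take i es @ drop j es) W"
proof -
  let ?vs' = "take (Suc i) vs @ drop (Suc j) vs" and ?es' = "take i es @ drop j es"
  let ?g = "\<lambda>k. if k < i then k else k + (j - i)"
  note short = shortcut_walk[OF assms(1-4)]
  have len: "length vs = Suc (length es)" "length ?vs' = Suc (length ?es')"
    using length_walk walk short(1) by blast+
  have active: "active_triple G W (es ! (k - 1)) (vs ! k) (es ! k)" if "0 < k" "k < length es" for k
    using assms(5) that len unfolding blocked_iff_inactive_triple by auto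
  have "active_triple G W (?es' ! (k - 1)) (?vs' ! k) (?es' ! k)" if "0 < k" "k < length ?es'" for k
  proof (cases "k = i")
    case True
    then show ?thesis
      using active_triple_at_repetition[OF walk active, of i j] short(4-6) that assms(2,4) len
      by auto
  next
    case False
    then have "?es' ! (k - 1) = es ! (?g k - 1)" "?es' ! k = es ! ?g k" "?vs' ! k = vs ! ?g k"
      using short(4-6) that len by auto
    moreover have "0 < ?g k" "?g k < length es" using that short(4) by auto
    ultimately show ?thesis using active by simp
  qed
  then show ?thesis
    using assms(5) short(2,3) len unfolding blocked_iff_inactive_triple by auto
qed

lemma active_path_of_active_walk:
  "is_walk G vs es \<Longrightarrow> \<not> blocked G vs es W \<Longrightarrow>
   \<exists>vs' es'. is_path G vs' es' \<and> hd vs' = hd vs \<and> last vs' = last vs \<and> \<not> blocked G vs' es' W"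
proof (induction "length vs" arbitrary: vs es rule: less_induct)
  case less
  show ?case
  proof (cases "distinct vs")
    case True
    then show ?thesis using less.prems unfolding is_path_def by blast
  next
    case False
    then obtain i j where ij: "i < j" "j < length vs" "vs ! i = vs ! j"
      by (metis distinct_conv_nth linorder_neqE_nat)
    note short = shortcut_walk[OF less.prems(1) ij]
    have "\<not> blocked G (take (Suc i) vs @ drop (Suc j) vs) (take i es @ drop j es) W"
      by (rule shortcut_not_blocked[OF less.prems(1) ij less.prems(2)])
    moreover have "length (take (Suc i) vs @ drop (Suc j) vs) < length vs"
      using ij by simp
    ultimately show ?thesis
      using less.hyps[OF _ short(1)] short(2,3) by auto
  qed
qed

lemma d_separated_blocks_walks:
  assumes "d_separated G X Y W" "is_walk G vs es" "hd vs \<in> X" "last vs \<in> Y"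
  shows "blocked G vs es W"
proof (rule ccontr)
  assume "\<not> blocked G vs es W"
  with assms(2) obtain vs' es' where "is_path G vs' es'" "hd vs' = hd vs" "last vs' = last vs"
      "\<not> blocked G vs' es' W"
    using active_path_of_active_walk by blast
  then show False using assms unfolding d_separated_def by metis
qed

lemma compatible_is_partition: "compatible G Gc \<Longrightarrow> is_partition (verts Gc) (verts G)"
  unfolding compatible_def by simp

definition cluster_of :: "'v set set \<Rightarrow> 'v \<Rightarrow> 'v set" where
  "cluster_of P v = (THE C. C \<in> P \<and> v \<in> C)"

lemma cluster_of_eq:
  assumes "is_partition P V" "C \<in> P" "v \<in> C"
  shows "cluster_of P v = C"
  unfolding cluster_of_def
proof (rule the_equality)
  show "C \<in> P \<and> v \<in> C" using assms(2,3) ..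
  show "D = C" if "D \<in> P \<and> v \<in> D" for D
    using assms that unfolding is_partition_def by blast
qed

lemma cluster_of_in:
  assumes "is_partition P V" "v \<in> V"
  shows "cluster_of P v \<in> P" "v \<in> cluster_of P v"
proof -
  obtain C where "C \<in> P" "v \<in> C" using assms unfolding is_partition_def by blast
  then show "cluster_of P v \<in> P" "v \<in> cluster_of P v"
    using cluster_of_eq[OF assms(1)] by simp_all
qed

lemma cluster_of_in_iff:
  assumes "is_partition P V" "S \<subseteq> P" "v \<in> V"
  shows "cluster_of P v \<in> S \<longleftrightarrow> v \<in> \<Union>S"
proof
  show "cluster_of P v \<in> S \<Longrightarrow> v \<in> \<Union>S" using cluster_of_in(2)[OF assms(1,3)] by blast
  show "v \<in> \<Union>S \<Longrightarrow> cluster_of P v \<in> S" using cluster_of_eq[OF assms(1)] assms(2) by blast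
qed

lemma has_edge_cluster_of:
  assumes "compatible G Gc" "a \<in> verts G" "b \<in> verts G" "has_edge G a k b"
  shows "has_edge Gc (cluster_of (verts Gc) a) k (cluster_of (verts Gc) b)"
proof -
  note P = compatible_is_partition[OF assms(1)]
  note a = cluster_of_in[OF P assms(2)] and b = cluster_of_in[OF P assms(3)]
  have D: "dir Gc = {(C, D). C \<in> verts Gc \<and> D \<in> verts Gc \<and> (\<exists>x\<in>C. \<exists>y\<in>D. (x, y) \<in> dir G)}"
    and B: "bid Gc = {(C, D). C \<in> verts Gc \<and> D \<in> verts Gc \<and> (\<exists>x\<in>C. \<exists>y\<in>D. (x, y) \<in> bid G)}"
    using assms(1) unfolding compatible_def by simp_all
  show ?thesis
    using assms(4) a b unfolding has_edge_def D B by (cases k) auto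
qed

lemma De_cluster_of:
  assumes "compatible G Gc" "dir G \<subseteq> verts G \<times> verts G" "v \<in> verts G" "w \<in> De G v"
  shows "cluster_of (verts Gc) w \<in> De Gc (cluster_of (verts Gc) v)"
proof -
  have "(v, w) \<in> (dir G)\<^sup>*" using assms(4) unfolding De_def by simp
  then have "(cluster_of (verts Gc) v, cluster_of (verts Gc) w) \<in> (dir Gc)\<^sup>*"
  proof (induction rule: rtrancl_induct)
    case (step y z)
    then have "y \<in> verts G" "z \<in> verts G" using assms(2) by auto
    with step have "has_edge Gc (cluster_of (verts Gc) y) Fwd (cluster_of (verts Gc) z)"
      using has_edge_cluster_of[OF assms(1), of y z Fwd] unfolding has_edge_def by simp
    with step.IH show ?case unfolding has_edge_def by simp
  qed simp
  then show ?thesis unfolding De_def by simp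
qed

lemma is_walk_map_cluster_of:
  assumes "compatible G Gc" "is_walk G vs es"
  shows "is_walk Gc (map (cluster_of (verts Gc)) vs) es"
proof -
  note P = compatible_is_partition[OF assms(1)]
  have vs: "set vs \<subseteq> verts G" "length vs = Suc (length es)"
    using assms(2) length_walk unfolding is_walk_def by blast+
  have "has_edge Gc (cluster_of (verts Gc) (vs ! k)) (es ! k) (cluster_of (verts Gc) (vs ! Suc k))"
    if "k < length es" for k
  proof -
    have "vs ! k \<in> set vs" "vs ! Suc k \<in> set vs" using that vs(2) by simp_all
    then show ?thesis
      using has_edge_cluster_of[OF assms(1) _ _ walk_has_edge[OF assms(2) that]] vs(1) by blast
  qed
  then show ?thesis
    using vs cluster_of_in(1)[OF P] unfolding is_walk_def by auto
qed

lemma active_triple_cluster_of: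
  assumes "compatible G Gc" "dir G \<subseteq> verts G \<times> verts G" "CW \<subseteq> verts Gc" "v \<in> verts G"
    and "active_triple G (\<Union>CW) a v b"
  shows "active_triple Gc CW a (cluster_of (verts Gc) v) b"
proof -
  note P = compatible_is_partition[OF assms(1)]
  show ?thesis
  proof (cases "collider a b")
    case True
    then obtain w where "w \<in> De G v" "w \<in> \<Union>CW"
      using assms(5) unfolding active_triple_def by auto
    moreover from this have "w \<in> verts G"
      using assms(2,4) unfolding De_def by (auto elim: rtranclE)
    ultimately have "cluster_of (verts Gc) w \<in> De Gc (cluster_of (verts Gc) v) \<inter> CW"
      using De_cluster_of[OF assms(1,2,4)] cluster_of_in_iff[OF P assms(3)] by blast
    then show ?thesis using True unfolding active_triple_def by auto
  next
    case False
    then show ?thesis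
      using assms(5) cluster_of_in_iff[OF P assms(3,4)] unfolding active_triple_def by simp
  qed
qed

lemma blocked_of_blocked_map_cluster_of:
  assumes "compatible G Gc" "dir G \<subseteq> verts G \<times> verts G" "CW \<subseteq> verts Gc" "is_walk G vs es"
    and "blocked Gc (map (cluster_of (verts Gc)) vs) es CW"
  shows "blocked G vs es (\<Union>CW)"
proof (rule ccontr)
  assume unblocked: "\<not> blocked G vs es (\<Union>CW)"
  note P = compatible_is_partition[OF assms(1)]
  have vs: "vs \<noteq> []" "set vs \<subseteq> verts G" using assms(4) unfolding is_walk_def by simp_all
  then have in_CW: "cluster_of (verts Gc) v \<in> CW \<longleftrightarrow> v \<in> \<Union>CW" if "v \<in> set vs" for v
    using cluster_of_in_iff[OF P assms(3)] that by blast
  have "active_triple Gc CW (es ! (k - 1)) (cluster_of (verts Gc) (vs ! k)) (es ! k)"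
    if "0 < k" "k < length vs - 1" for k
  proof (rule active_triple_cluster_of[OF assms(1-3)])
    show "vs ! k \<in> verts G" using that vs(2) by (simp add: subset_iff)
    show "active_triple G (\<Union>CW) (es ! (k - 1)) (vs ! k) (es ! k)"
      using unblocked that unfolding blocked_iff_inactive_triple by blast
  qed
  then show False
    using assms(5) unblocked in_CW[of "hd vs"] in_CW[of "last vs"] vs(1)
    unfolding blocked_iff_inactive_triple by (auto simp: hd_map last_map)
qed

theorem theorem1:
  fixes G :: "'v mgraph" and Gc :: "'v set mgraph"
    and CX CY CW :: "'v set set"
  assumes "is_ADMG G"
    and "compatible G Gc"
    and "CX \<subseteq> verts Gc" and "CY \<subseteq> verts Gc" and "CW \<subseteq> verts Gc"
    and "CX \<inter> CY = {}" and "CX \<inter> CW = {}" and "CY \<inter> CW = {}"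
    and "d_separated Gc CX CY CW"
  shows "d_separated G (\<Union>CX) (\<Union>CY) (\<Union>CW)"
  unfolding d_separated_def
proof (intro allI impI, elim conjE)
  fix vs es
  assume path: "is_path G vs es" and "hd vs \<in> \<Union>CX" "last vs \<in> \<Union>CY"
  let ?c = "cluster_of (verts Gc)"
  note P = compatible_is_partition[OF assms(2)]
  have walk: "is_walk G vs es" using path unfolding is_path_def by simp
  then have "vs \<noteq> []" "hd vs \<in> verts G" "last vs \<in> verts G"
    unfolding is_walk_def by auto
  then have "hd (map ?c vs) \<in> CX" "last (map ?c vs) \<in> CY"
    using \<open>hd vs \<in> \<Union>CX\<close> \<open>last vs \<in> \<Union>CY\<close> cluster_of_in_iff[OF P assms(3)]
      cluster_of_in_iff[OF P assms(4)] by (simp_all add: hd_map last_map)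
  with assms(9) have "blocked Gc (map ?c vs) es CW"
    using d_separated_blocks_walks is_walk_map_cluster_of[OF assms(2) walk] by blast
  moreover have "dir G \<subseteq> verts G \<times> verts G" using assms(1) unfolding is_ADMG_def by simp
  ultimately show "blocked G vs es (\<Union>CW)"
    using blocked_of_blocked_map_cluster_of[OF assms(2) _ assms(5) walk] by blast
qed

end
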